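(* Let $n\ge2$, $F\in GL^+(n)$, $\mu>0$, $\mu_c\ge0$. If $X$ is a symmetric matrix with $X^2=FF^T$ and $\det X>0$, then $R=X^TF^{-T}\in SO(n)$ is a critical point of $\widetilde W_{\mu,\mu_c}(\cdot;F)$. In particular, the orthogonal factor $R_p$ of the polar decomposition $F=R_pU$ ($R_p\in SO(n)$, $U$ symmetric positive definite) is a critical point of $\widetilde W_{\mu,\mu_c}(\cdot;F)$.
   Context: $\mathrm{sym}(Y)=\tfrac12(Y+Y^T)$, $\mathrm{skew}(Y)=\tfrac12(Y-Y^T)$, $\|Y\|^2=\mathrm{tr}(Y^TY)$. For $F\in GL^+(n)$ (positive determinant), $\mu>0$, $\mu_c\ge0$: $\widetilde W_{\mu,\mu_c}(R;F)=\mu\|\mathrm{sym}(R^TF-\mathbb I_n)\|^2+\mu_c\|\mathrm{skew}(R^TF-\mathbb I_n)\|^2$ for $R\in SO(n)$; critical points are those of its restriction to the submanifold $SO(n)\subset\mathcal M_{n\times n}(\mathbb R)$. *)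

theory Defs
  imports "HOL-Analysis.Analysis"
begin

definition msym :: "real^'n^'n \<Rightarrow> real^'n^'n" where
  "msym Y = (1/2) *\<^sub>R (Y + transpose Y)"

definition mskew :: "real^'n^'n \<Rightarrow> real^'n^'n" where
  "mskew Y = (1/2) *\<^sub>R (Y - transpose Y)"

definition fro_sq :: "real^'n^'n \<Rightarrow> real" where
  "fro_sq Y = trace (transpose Y ** Y)"

definition Wtilde :: "real \<Rightarrow> real \<Rightarrow> real^'n^'n \<Rightarrow> real^'n^'n \<Rightarrow> real" where
  "Wtilde mu muc F R =
     mu * fro_sq (msym (transpose R ** F - mat 1)) + muc * fro_sq (mskew (transpose R ** F - mat 1))"

definition SOn :: "(real^'n^'n) set" where
  "SOn = {Q. rotation_matrix Q}"

text \<open>Critical point of the restriction of a (smooth) function f on matrices to the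
  submanifold SO(n): R lies in SO(n) and the derivative of f along every differentiable
  curve in SO(n) through R vanishes at R (i.e. df(R) vanishes on the tangent space T_R SO(n)).\<close>
definition critical_point_SO :: "(real^'n^'n \<Rightarrow> real) \<Rightarrow> real^'n^'n \<Rightarrow> bool" where
  "critical_point_SO f R \<longleftrightarrow> R \<in> SOn \<and>
     (\<forall>\<gamma> v. (\<forall>t. \<gamma> t \<in> SOn) \<longrightarrow> \<gamma> 0 = R \<longrightarrow> (\<gamma> has_vector_derivative v) (at 0) \<longrightarrow>
        ((\<lambda>t. f (\<gamma> t)) has_real_derivative 0) (at 0))"

definition sym_pos_def_matrix :: "real^'n^'n \<Rightarrow> bool" where
  "sym_pos_def_matrix U \<longleftrightarrow> transpose U = U \<and> (\<forall>x. x \<noteq> 0 \<longrightarrow> x \<bullet> (U *v x) > 0)"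

end

theory Submission
  imports Defs
begin

text \<open>The derivative of \<open>R \<mapsto> W(R;F)\<close> along a curve in SO(n) through \<open>R\<close> with velocity
  \<open>v\<close> only involves \<open>v\<^sup>T R = B\<close>, which is skew-symmetric, and \<open>v\<^sup>T F = B U\<close> with
  \<open>U = R\<^sup>T F\<close>. If \<open>U\<close> is symmetric, the skew part of \<open>U - I\<close> vanishes and the
  symmetric part contributes \<open>tr((U - I) B U) = tr(B (U\<^sup>2 - U)) = 0\<close>, the trace of a
  skew-symmetric times a symmetric matrix. For \<open>R = X F\<^sup>-\<^sup>T\<close> with \<open>X\<^sup>2 = F F\<^sup>T\<close> one checks
  \<open>R\<^sup>T R = I\<close>, \<open>det R > 0\<close> and \<open>R\<^sup>T F = F\<^sup>-\<^sup>1 X F\<close> symmetric, because \<open>X\<close> commutes with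
  \<open>F F\<^sup>T\<close>; for the polar factor, \<open>R\<^sub>p\<^sup>T F = U\<close> is symmetric by assumption.\<close>

lemma matrix_add_rdistrib: "(A + B) ** C = A ** C + B ** C"
  by (vector matrix_matrix_mult_def sum.distrib[symmetric] field_simps)

lemma matrix_diff_ldistrib: "A ** (B - C) = A ** B - (A ** C :: 'a::ring_1^'k^'m)"
  by (vector matrix_matrix_mult_def sum_subtractf[symmetric] field_simps)

lemma bounded_bilinear_matrix_mult:
  "bounded_bilinear (\<lambda>(A::real^'n^'m) (B::real^'k^'n). A ** B)"
proof -
  have "bilinear (\<lambda>(A::real^'n^'m) (B::real^'k^'n). A ** B)"
    unfolding bilinear_def
    by (auto intro!: linearI simp: matrix_add_ldistrib matrix_add_rdistrib
        matrix_scalar_ac scalar_matrix_assoc)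
  then show ?thesis by (simp add: bilinear_conv_bounded_bilinear)
qed

lemma bounded_linear_transpose: "bounded_linear (transpose :: real^'n^'m \<Rightarrow> real^'m^'n)"
  unfolding linear_conv_bounded_linear[symmetric]
  by (auto intro!: linearI simp: vec_eq_iff transpose_def)

lemma bounded_linear_msym: "bounded_linear (msym :: real^'n^'n \<Rightarrow> real^'n^'n)"
  unfolding linear_conv_bounded_linear[symmetric]
  by (auto intro!: linearI simp: vec_eq_iff transpose_def msym_def algebra_simps)

lemma bounded_linear_mskew: "bounded_linear (mskew :: real^'n^'n \<Rightarrow> real^'n^'n)"
  unfolding linear_conv_bounded_linear[symmetric]
  by (auto intro!: linearI simp: vec_eq_iff transpose_def mskew_def algebra_simps)

lemma inner_matrix_eq_trace: "inner (A::real^'n^'n) B = trace (transpose A ** B)"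
  by (simp add: inner_vec_def trace_def matrix_matrix_mult_def transpose_def)
    (subst sum.swap, simp)

lemma inner_transpose_transpose: "inner (transpose (A::real^'n^'n)) (transpose B) = inner A B"
  by (simp add: inner_vec_def transpose_def) (subst sum.swap, simp)

lemma fro_sq_eq_inner: "fro_sq Y = inner Y Y"
  by (simp add: fro_sq_def inner_matrix_eq_trace)

lemma inner_msym_right:
  fixes S Y :: "real^'n^'n"
  assumes "transpose S = S"
  shows "inner S (msym Y) = inner S Y"
  using inner_transpose_transpose[of S Y] assms
  by (simp add: msym_def inner_add_right)

lemma msym_symmetric: "transpose Y = Y \<Longrightarrow> msym (Y::real^'n^'n) = Y"
  by (simp add: msym_def flip: scaleR_2)

lemma mskew_symmetric: "transpose Y = Y \<Longrightarrow> mskew (Y::real^'n^'n) = 0"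
  by (simp add: mskew_def)

lemma trace_transpose: "trace (transpose (A::real^'n^'n)) = trace A"
  by (simp add: trace_def transpose_def)

lemma trace_skew_mult_symmetric:
  fixes B W :: "real^'n^'n"
  assumes "transpose B = - B" "transpose W = W"
  shows "trace (B ** W) = 0"
proof -
  have "trace (B ** W) = trace (transpose (B ** W))" by (simp add: trace_transpose)
  also have "\<dots> = trace (W ** (- B))" using assms by (simp add: matrix_transpose_mul)
  also have "\<dots> = - trace (W ** B)"
    by (simp add: trace_def matrix_matrix_mult_def sum_negf)
  also have "\<dots> = - trace (B ** W)" using trace_mul_sym[of W B] by simp
  finally show ?thesis by simp
qed

lemma has_real_derivative_fro_sq:
  assumes "(f has_vector_derivative f') (at t)"
  shows "((\<lambda>s. fro_sq (f s :: real^'n^'n)) has_real_derivative 2 * inner (f t) f') (at t)"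
  using bounded_bilinear.has_vector_derivative[OF bounded_bilinear_inner assms assms]
  by (simp add: fro_sq_eq_inner has_real_derivative_iff_has_vector_derivative inner_commute)

lemma Wtilde_has_real_derivative_along:
  fixes \<gamma> :: "real \<Rightarrow> real^'n^'n"
  assumes "(\<gamma> has_vector_derivative v) (at t)"
  shows "((\<lambda>s. Wtilde mu muc F (\<gamma> s)) has_real_derivative
      2 * mu * inner (msym (transpose (\<gamma> t) ** F - mat 1)) (msym (transpose v ** F))
    + 2 * muc * inner (mskew (transpose (\<gamma> t) ** F - mat 1)) (mskew (transpose v ** F))) (at t)"
proof -
  have "((\<lambda>s. transpose (\<gamma> s) ** F - mat 1) has_vector_derivative transpose v ** F) (at t)"
    using bounded_bilinear.has_vector_derivative[OF bounded_bilinear_matrix_mult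
        bounded_linear.has_vector_derivative[OF bounded_linear_transpose assms]
        has_vector_derivative_const[of F]]
    by (simp add: has_vector_derivative_diff_const)
  from bounded_linear.has_vector_derivative[OF bounded_linear_msym this]
    bounded_linear.has_vector_derivative[OF bounded_linear_mskew this]
  show ?thesis
    unfolding Wtilde_def
    by (auto intro!: derivative_eq_intros has_real_derivative_fro_sq)
qed

lemma SOn_curve_tangent_skew:
  fixes \<gamma> :: "real \<Rightarrow> real^'n^'n"
  assumes "\<forall>s. \<gamma> s \<in> SOn" and "(\<gamma> has_vector_derivative v) (at t)"
  shows "transpose (transpose v ** \<gamma> t) = - (transpose v ** \<gamma> t)"
proof -
  have "((\<lambda>s. transpose (\<gamma> s) ** \<gamma> s) has_vector_derivative
      transpose (\<gamma> t) ** v + transpose v ** \<gamma> t) (at t)"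
    using bounded_bilinear.has_vector_derivative[OF bounded_bilinear_matrix_mult
        bounded_linear.has_vector_derivative[OF bounded_linear_transpose assms(2)] assms(2)]
    by simp
  moreover have "transpose (\<gamma> s) ** \<gamma> s = mat 1" for s
    using assms(1) by (simp add: SOn_def rotation_matrix_def orthogonal_matrix_def)
  then have "((\<lambda>s. transpose (\<gamma> s) ** \<gamma> s) has_vector_derivative 0) (at t)"
    by simp
  ultimately have "transpose (\<gamma> t) ** v + transpose v ** \<gamma> t = 0"
    using vector_derivative_unique_at by blast
  then show ?thesis
    by (simp add: matrix_transpose_mul eq_neg_iff_add_eq_0 add.commute)
qed

lemma critical_point_SO_Wtilde_if_symmetric:
  fixes F R :: "real^'n^'n"
  assumes R: "R \<in> SOn" and U_sym: "transpose (transpose R ** F) = transpose R ** F"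
  shows "critical_point_SO (Wtilde mu muc F) R"
  unfolding critical_point_SO_def
proof (intro conjI allI impI R)
  fix \<gamma> :: "real \<Rightarrow> real^'n^'n" and v
  assume SO: "\<forall>t. \<gamma> t \<in> SOn" and \<gamma>0: "\<gamma> 0 = R" and v: "(\<gamma> has_vector_derivative v) (at 0)"
  define U where "U = transpose R ** F"
  define B where "B = transpose v ** R"
  have U: "transpose U = U" using U_sym by (simp add: U_def)
  have B: "transpose B = - B"
    using SOn_curve_tangent_skew[OF SO v] by (simp add: B_def \<gamma>0)
  have "R ** transpose R = mat 1"
    using R by (simp add: SOn_def rotation_matrix_def orthogonal_matrix_def)
  then have "R ** U = F" by (simp add: U_def matrix_mul_assoc)
  then have vF: "transpose v ** F = B ** U" by (simp add: B_def flip: matrix_mul_assoc)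
  have U1: "transpose (U - mat 1) = U - mat 1"
    using U linear_diff[OF bounded_linear.linear[OF bounded_linear_transpose], of U "mat 1"]
    by simp
  have "inner (msym (U - mat 1)) (msym (B ** U)) = inner (U - mat 1) (B ** U)"
    using U1 by (simp add: inner_msym_right msym_symmetric)
  also have "\<dots> = trace (B ** (U ** (U - mat 1)))"
    using trace_mul_sym[of "U - mat 1" "B ** U"]
    by (simp add: inner_matrix_eq_trace U1 matrix_mul_assoc)
  also have "\<dots> = trace (B ** (U ** U)) - trace (B ** U)"
    by (simp add: matrix_diff_ldistrib trace_sub)
  also have "\<dots> = 0"
    using U by (simp add: trace_skew_mult_symmetric[OF B] matrix_transpose_mul)
  finally have "inner (msym (U - mat 1)) (msym (B ** U)) = 0" .
  with Wtilde_has_real_derivative_along[OF v, of mu muc F]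
  show "((\<lambda>t. Wtilde mu muc F (\<gamma> t)) has_real_derivative 0) (at 0)"
    using mskew_symmetric[OF U1] by (simp add: \<gamma>0 vF U_def)
qed

lemma rotation_from_matrix_sqrt:
  fixes F X :: "real^'n^'n"
  assumes F: "det F > 0" and X: "transpose X = X" "X ** X = F ** transpose F" "det X > 0"
  defines "R \<equiv> transpose X ** transpose (matrix_inv F)"
  shows "R \<in> SOn" and "transpose (transpose R ** F) = transpose R ** F"
proof -
  define G where "G = matrix_inv F"
  have "invertible F" using F by (simp add: invertible_det_nz)
  then have "F ** G = mat 1 \<and> G ** F = mat 1"
    unfolding G_def matrix_inv_def invertible_def by (rule someI_ex)
  then have FG: "F ** G = mat 1" "G ** F = mat 1" by simp_all
  then have GT: "transpose F ** transpose G = mat 1"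
    by (metis matrix_transpose_mul transpose_mat)
  have RT: "transpose R = G ** X" using X(1) by (simp add: R_def G_def matrix_transpose_mul)
  have "transpose R ** R = G ** (X ** X) ** transpose G"
    unfolding RT by (simp only: R_def G_def X(1) matrix_mul_assoc)
  also have "\<dots> = (G ** F) ** (transpose F ** transpose G)"
    by (simp only: X(2) matrix_mul_assoc)
  finally have "transpose R ** R = (G ** F) ** (transpose F ** transpose G)" .
  then have orth: "orthogonal_matrix R" using FG GT by (simp add: orthogonal_matrix)
  have "det G * det F = 1" using FG by (metis det_I det_mul)
  then have "det G > 0" using F by (metis zero_less_mult_pos2 zero_less_one)
  then have "det R > 0" using X(3) by (simp add: R_def G_def det_mul det_transpose)
  then show "R \<in> SOn"
    using det_orthogonal_matrix[OF orth] orth by (auto simp: SOn_def rotation_matrix_def)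
  have X_commute: "X ** (F ** transpose F) = (F ** transpose F) ** X"
    by (simp only: X(2)[symmetric] matrix_mul_assoc)
  have "transpose R ** F = G ** X ** F ** (transpose F ** transpose G)"
    using GT by (simp add: RT)
  also have "\<dots> = G ** (X ** (F ** transpose F)) ** transpose G"
    by (simp add: matrix_mul_assoc)
  also have "\<dots> = G ** ((F ** transpose F) ** X) ** transpose G"
    by (simp only: X_commute)
  also have "\<dots> = (G ** F) ** transpose F ** X ** transpose G"
    by (simp only: matrix_mul_assoc)
  also have "\<dots> = transpose F ** X ** transpose G"
    by (simp add: FG(2))
  finally show "transpose (transpose R ** F) = transpose R ** F"
    by (simp add: RT X(1) matrix_transpose_mul matrix_mul_assoc G_def)
qed

theorem mainTheorem2:
  fixes F X :: "real^'n^'n" and mu muc :: real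
  assumes "CARD('n) \<ge> 2"
    and "det F > 0"
    and "mu > 0" and "muc \<ge> 0"
  shows "(transpose X = X \<and> X ** X = F ** transpose F \<and> det X > 0 \<longrightarrow>
            transpose X ** transpose (matrix_inv F) \<in> SOn \<and>
            critical_point_SO (Wtilde mu muc F) (transpose X ** transpose (matrix_inv F)))
       \<and> (\<forall>Rp U. Rp \<in> SOn \<and> sym_pos_def_matrix U \<and> F = Rp ** U \<longrightarrow>
            critical_point_SO (Wtilde mu muc F) Rp)"
proof (intro conjI impI allI)
  assume "transpose X = X \<and> X ** X = F ** transpose F \<and> det X > 0"
  with \<open>det F > 0\<close> rotation_from_matrix_sqrt
  show "transpose X ** transpose (matrix_inv F) \<in> SOn"
    and "critical_point_SO (Wtilde mu muc F) (transpose X ** transpose (matrix_inv F))"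
    by (blast intro: critical_point_SO_Wtilde_if_symmetric)+
next
  fix Rp U :: "real^'n^'n"
  assume polar: "Rp \<in> SOn \<and> sym_pos_def_matrix U \<and> F = Rp ** U"
  then have "transpose Rp ** F = U"
    by (simp add: SOn_def rotation_matrix_def orthogonal_matrix_def matrix_mul_assoc)
  with polar show "critical_point_SO (Wtilde mu muc F) Rp"
    by (auto simp: sym_pos_def_matrix_def intro: critical_point_SO_Wtilde_if_symmetric)
qed

end
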